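(* Let $G$ be a connected nilpotent Lie group and $V$ a finite-dimensional real $G$-module of unipotent type. Then for every $v\in V$, the orbit $Gv$ is dense in its affine hull (the smallest affine subspace of $V$ containing $Gv$) with respect to the Bohr topology of $V$.
   Context: A finite-dimensional $G$-module $V$ is of unipotent type if the Lie algebra $\mathfrak g$ of $G$ acts on $V$ by nilpotent operators. For the additive group of $V$ (a locally compact abelian group) with Pontryagin dual $V^*$, the Bohr compactification $bV$ is the dual of $V^*$ with the discrete topology, and $V$ embeds densely in $bV$ by identifying $V$ with its double dual. The Bohr topology of $V$ is the relative topology of $V$ as a subset of $bV$ (equivalently, the coarsest topology making all continuous characters of $V$ continuous). *)

theory Defs
  imports "HOL-Analysis.Analysis"
begin

definition continuous_characters :: "('v::euclidean_space \<Rightarrow> complex) set" where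
  "continuous_characters = {ch. continuous_on UNIV ch \<and> (\<forall>x. norm (ch x) = 1)
      \<and> (\<forall>x y. ch (x + y) = ch x * ch y)}"

definition bohr_topology :: "'v::euclidean_space topology" where
  "bohr_topology = topology_generated_by
     {ch -` U | ch U. ch \<in> continuous_characters \<and> open U}"

definition lie_bracket :: "('v::real_vector \<Rightarrow> 'v) \<Rightarrow> ('v \<Rightarrow> 'v) \<Rightarrow> ('v \<Rightarrow> 'v)" where
  "lie_bracket X Y = (\<lambda>v. X (Y v) - Y (X v))"

definition lie_subalgebra :: "('v::real_vector \<Rightarrow> 'v) set \<Rightarrow> bool" where
  "lie_subalgebra L \<longleftrightarrow> (\<forall>X\<in>L. linear X) \<and> (\<lambda>_. 0) \<in> L
     \<and> (\<forall>X\<in>L. \<forall>Y\<in>L. (\<lambda>v. X v + Y v) \<in> L)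
     \<and> (\<forall>c::real. \<forall>X\<in>L. (\<lambda>v. c *\<^sub>R X v) \<in> L)
     \<and> (\<forall>X\<in>L. \<forall>Y\<in>L. lie_bracket X Y \<in> L)"

definition nilpotent_lie_algebra :: "('v::real_vector \<Rightarrow> 'v) set \<Rightarrow> bool" where
  "nilpotent_lie_algebra L \<longleftrightarrow> (\<exists>k. \<forall>xs Y. length xs = k \<and> set xs \<subseteq> L \<and> Y \<in> L
       \<longrightarrow> foldr lie_bracket xs Y = (\<lambda>_. 0))"

definition nilpotent_op :: "('v::real_vector \<Rightarrow> 'v) \<Rightarrow> bool" where
  "nilpotent_op X \<longleftrightarrow> (\<exists>k. (X ^^ k) = (\<lambda>_. 0))"

definition op_exp :: "('v::euclidean_space \<Rightarrow> 'v) \<Rightarrow> ('v \<Rightarrow> 'v)" where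
  "op_exp X = (\<lambda>v. (\<Sum>k. (1 / fact k) *\<^sub>R (X ^^ k) v))"

text \<open>The connected Lie subgroup of GL(V) with Lie algebra L: generated by exp(L).\<close>
inductive_set lie_group_of :: "('v::euclidean_space \<Rightarrow> 'v) set \<Rightarrow> ('v \<Rightarrow> 'v) set"
  for L where
  id_in: "id \<in> lie_group_of L"
| exp_in: "X \<in> L \<Longrightarrow> op_exp X \<in> lie_group_of L"
| comp_in: "g \<in> lie_group_of L \<Longrightarrow> h \<in> lie_group_of L \<Longrightarrow> g \<circ> h \<in> lie_group_of L"
| inv_in: "g \<in> lie_group_of L \<Longrightarrow> inv g \<in> lie_group_of L"

end

theory Submission
  imports Defs "HOL-Computational_Algebra.Polynomial"
begin

(* Every finite subset of the orbit G v lies on a single curve t \<mapsto> g(t) v, where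
   g(t) = exp(p_1(t) X_1) \<circ> ... \<circ> exp(p_m(t) X_m) with X_i \<in> L and real polynomials p_i:
   a new orbit point h v is added at a fresh time \<tau>0 by appending a path to g(\<tau>0)^-1 h,
   reparametrised by a polynomial vanishing at the old times and equal to 1 at \<tau>0.
   As the X_i are nilpotent, g(t) v is a polynomial curve a_0 + t a_1 + ... + t^D a_D.
   Such a curve is Bohr dense in its affine hull a_0 + span {a_1, ..., a_D}, by induction on D:
   for finitely many characters, every point r a_D is close to some \<sigma> a_D with \<sigma> in a fixed
   interval [0, H] (compactness of the torus), and for large t the time change
   t \<mapsto> t + \<sigma> / (D t^(D-1)) moves the curve by approximately \<sigma> a_D, which cancels
   the offset created by the top coefficient. *)

definition char_close :: "('v \<Rightarrow> complex) set \<Rightarrow> real \<Rightarrow> 'v \<Rightarrow> 'v \<Rightarrow> bool" where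
  "char_close F e x y \<longleftrightarrow> (\<forall>ch\<in>F. norm (ch x - ch y) < e)"

lemma continuous_charactersD:
  assumes "ch \<in> continuous_characters"
  shows "continuous_on UNIV ch" "norm (ch x) = 1" "ch (x + y) = ch x * ch y"
  using assms unfolding continuous_characters_def by auto

lemma continuous_character_dist:
  fixes x y :: "'v::euclidean_space"
  assumes "ch \<in> continuous_characters"
  shows "norm (ch x - ch y) = norm (ch (x - y) - 1)"
proof -
  have "ch x - ch y = (ch (x - y) - 1) * ch y"
    using continuous_charactersD(3)[OF assms, of "x - y" y] by (simp add: algebra_simps)
  then show ?thesis
    using continuous_charactersD(2)[OF assms, of y] by (simp add: norm_mult)
qed

lemma char_close_diff:
  fixes x y :: "'v::euclidean_space"
  assumes "F \<subseteq> continuous_characters"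
  shows "char_close F e x y \<longleftrightarrow> char_close F e (x - y) 0"
  using assms unfolding char_close_def
  by (auto simp: continuous_character_dist[of _ x y] continuous_character_dist[of _ "x - y" 0] subset_iff)

lemma char_close_translate:
  fixes x y :: "'v::euclidean_space"
  assumes "F \<subseteq> continuous_characters"
  shows "char_close F e (x + w) (y + w) \<longleftrightarrow> char_close F e x y"
  using char_close_diff[OF assms, of e "x + w" "y + w"] char_close_diff[OF assms, of e x y] by simp

lemma char_close_refl: "e > 0 \<Longrightarrow> char_close F e x x"
  unfolding char_close_def by simp

lemma char_close_trans:
  assumes "char_close F e1 x y" "char_close F e2 y z"
  shows "char_close F (e1 + e2) x z"
  unfolding char_close_def
proof
  fix ch assume "ch \<in> F"
  then have "norm (ch x - ch y) < e1" "norm (ch y - ch z) < e2"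
    using assms unfolding char_close_def by auto
  then show "norm (ch x - ch z) < e1 + e2"
    using norm_triangle_ineq[of "ch x - ch y" "ch y - ch z"] by simp
qed

lemma char_close_cancel_offset:
  fixes b :: "'v::euclidean_space"
  assumes F: "F \<subseteq> continuous_characters"
    and "char_close F e x (w + \<sigma> *\<^sub>R b)" "char_close F e w (z + r *\<^sub>R b)"
    and "char_close F e (\<sigma> *\<^sub>R b) ((- r) *\<^sub>R b)"
  shows "char_close F (3 * e) x z"
proof -
  have "char_close F e (w + \<sigma> *\<^sub>R b) (z + r *\<^sub>R b + \<sigma> *\<^sub>R b)"
    using assms(3) char_close_translate[OF F] by blast
  moreover have "char_close F e (\<sigma> *\<^sub>R b + (z + r *\<^sub>R b)) ((- r) *\<^sub>R b + (z + r *\<^sub>R b))"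
    using assms(4) char_close_translate[OF F] by blast
  then have "char_close F e (z + r *\<^sub>R b + \<sigma> *\<^sub>R b) z"
    by (simp add: algebra_simps)
  ultimately have "char_close F (e + e + e) x z"
    by (rule char_close_trans[OF char_close_trans[OF assms(2)]])
  then show ?thesis by simp
qed

lemma char_close_near_0:
  fixes F :: "('v::euclidean_space \<Rightarrow> complex) set"
  assumes "finite F" "F \<subseteq> continuous_characters" "e > 0"
  shows "\<exists>d>0. \<forall>x::'v. norm x < d \<longrightarrow> char_close F e x 0"
proof -
  have "\<forall>ch\<in>F. eventually (\<lambda>x. norm (ch x - ch 0) < e) (nhds (0::'v))"
  proof
    fix ch assume "ch \<in> F"
    then have "continuous_on UNIV ch" using assms(2) continuous_charactersD(1) by blast
    then have "(ch \<longlongrightarrow> ch 0) (nhds 0)"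
      by (metis UNIV_I continuous_on_def open_UNIV tendsto_at_iff_tendsto_nhds at_within_open)
    then show "eventually (\<lambda>x. norm (ch x - ch 0) < e) (nhds (0::'v))"
      using assms(3) by (simp add: tendsto_iff dist_norm)
  qed
  then have "eventually (\<lambda>x. \<forall>ch\<in>F. norm (ch x - ch 0) < e) (nhds (0::'v))"
    by (rule eventually_ball_finite[OF assms(1)])
  then obtain d where "d > 0" "\<forall>x. dist x 0 < d \<longrightarrow> (\<forall>ch\<in>F. norm (ch x - ch 0) < e)"
    unfolding eventually_nhds_metric by auto
  then show ?thesis
    unfolding char_close_def dist_norm by (intro exI[of _ d]) simp
qed

lemma bohr_open_contains_char_neighbourhood:
  fixes T :: "'v::euclidean_space set"
  assumes "openin bohr_topology T" "y \<in> T"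
  shows "\<exists>F e. finite F \<and> F \<subseteq> continuous_characters \<and> e > 0 \<and> {x. char_close F e x y} \<subseteq> T"
proof -
  have "generate_topology_on {ch -` U | ch U. ch \<in> (continuous_characters :: ('v \<Rightarrow> complex) set) \<and> open U} T"
    using assms(1) unfolding bohr_topology_def openin_topology_generated_by_iff .
  then show ?thesis
    using assms(2)
  proof (induction arbitrary: y rule: generate_topology_on.induct)
    case Empty
    then show ?case by simp
  next
    case (Int A B)
    then have "y \<in> A" "y \<in> B" by simp_all
    obtain F1 e1 where F1: "finite F1" "F1 \<subseteq> continuous_characters" "e1 > 0"
      "{x. char_close F1 e1 x y} \<subseteq> A"
      using Int.IH(1)[OF \<open>y \<in> A\<close>] by blast
    obtain F2 e2 where F2: "finite F2" "F2 \<subseteq> continuous_characters" "e2 > 0"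
      "{x. char_close F2 e2 x y} \<subseteq> B"
      using Int.IH(2)[OF \<open>y \<in> B\<close>] by blast
    have "char_close F1 e1 x y" "char_close F2 e2 x y"
      if "char_close (F1 \<union> F2) (min e1 e2) x y" for x
      using that unfolding char_close_def by (meson UnI1 UnI2 min_less_iff_conj)+
    then have "{x. char_close (F1 \<union> F2) (min e1 e2) x y} \<subseteq> A \<inter> B"
      using F1(4) F2(4) by blast
    then show ?case
      using F1(1-3) F2(1-3) by (intro exI[of _ "F1 \<union> F2"] exI[of _ "min e1 e2"]) simp
  next
    case (UN K)
    from UN.prems obtain k where k: "k \<in> K" "y \<in> k" by blast
    obtain F e where "finite F" "F \<subseteq> continuous_characters" "e > 0"
      "{x. char_close F e x y} \<subseteq> k"
      using UN.IH[OF k] by blast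
    then show ?case
      using k(1) by (intro exI[of _ F] exI[of _ e]) blast
  next
    case (Basis S)
    from Basis.hyps obtain ch U where S: "S = ch -` U" "ch \<in> continuous_characters" "open U" by blast
    then obtain e where e: "e > 0" "ball (ch y) e \<subseteq> U"
      using Basis.prems open_contains_ball by blast
    then have "{x. char_close {ch} e x y} \<subseteq> S"
      using S(1) by (auto simp: char_close_def subset_iff dist_norm norm_minus_commute)
    then show ?case
      using S(2) e(1) by (intro exI[of _ "{ch}"] exI[of _ e]) auto
  qed
qed

lemma in_bohr_closure_ofI:
  fixes y :: "'v::euclidean_space"
  assumes "\<And>F e. finite F \<Longrightarrow> F \<subseteq> continuous_characters \<Longrightarrow> e > 0
    \<Longrightarrow> \<exists>x\<in>S. char_close F e x y"
  shows "y \<in> bohr_topology closure_of S"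
proof -
  have "(\<lambda>_. 1) \<in> (continuous_characters :: ('v \<Rightarrow> complex) set)"
    unfolding continuous_characters_def by auto
  then have "topspace (bohr_topology :: 'v topology) = UNIV"
    unfolding bohr_topology_def topology_generated_by_topspace
    by (auto intro!: exI[of _ UNIV] exI[of _ "\<lambda>_::'v. 1::complex"])
  moreover have "\<exists>x\<in>S. x \<in> T" if T: "y \<in> T" "openin bohr_topology T" for T
  proof -
    obtain F e where "finite F" "F \<subseteq> continuous_characters" "e > 0" "{x. char_close F e x y} \<subseteq> T"
      using bohr_open_contains_char_neighbourhood[OF T(2,1)] by blast
    moreover obtain x where "x \<in> S" "char_close F e x y"
      using assms calculation(1-3) by blast
    ultimately show ?thesis by blast
  qed
  ultimately show ?thesis
    unfolding in_closure_of by blast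
qed

lemma char_close_subseq:
  fixes x :: "nat \<Rightarrow> 'v::euclidean_space"
  assumes "finite F" "F \<subseteq> continuous_characters" "e > 0"
  shows "\<exists>r :: nat \<Rightarrow> nat. strict_mono r \<and> (\<forall>i j. char_close F e (x (r i)) (x (r j)))"
  using assms(1,2)
proof (induction F rule: finite_induct)
  case empty
  have "strict_mono (id :: nat \<Rightarrow> nat) \<and> (\<forall>i j. char_close {} e (x (id i)) (x (id j)))"
    by (simp add: strict_mono_id char_close_def)
  then show ?case by blast
next
  case (insert ch F)
  obtain r :: "nat \<Rightarrow> nat" where r: "strict_mono r" "\<forall>i j. char_close F e (x (r i)) (x (r j))"
    using insert.IH insert.prems by auto
  have ch: "ch \<in> continuous_characters" using insert.prems by auto
  have sphere: "\<And>n. ch (x (r n)) \<in> sphere 0 1"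
    using continuous_charactersD(2)[OF ch] by simp
  obtain l and r' :: "nat \<Rightarrow> nat"
    where lr: "strict_mono r'" "((\<lambda>n. ch (x (r n))) \<circ> r') \<longlonglongrightarrow> l"
    using compact_sphere[of "0::complex" 1, unfolded compact_def, rule_format,
        of "\<lambda>n. ch (x (r n))", OF sphere]
    by blast
  obtain N where N: "\<forall>n\<ge>N. norm (((\<lambda>n. ch (x (r n))) \<circ> r') n - l) < e/2"
    using LIMSEQ_D[OF lr(2)] assms(3) by (meson half_gt_zero)
  define r2 where "r2 n = r (r' (n + N))" for n
  have "strict_mono r2"
    unfolding r2_def using r(1) lr(1) by (simp add: strict_mono_def)
  moreover have "char_close (insert ch F) e (x (r2 i)) (x (r2 j))" for i j
  proof -
    have "norm (ch (x (r2 i)) - l) < e/2" "norm (ch (x (r2 j)) - l) < e/2"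
      using N[rule_format, of "i + N"] N[rule_format, of "j + N"] by (simp_all add: r2_def)
    then have "norm (ch (x (r2 i)) - ch (x (r2 j))) < e"
      using norm_triangle_ineq4[of "ch (x (r2 i)) - l" "ch (x (r2 j)) - l"] by simp
    moreover have "char_close F e (x (r2 i)) (x (r2 j))"
      using r(2) by (simp add: r2_def)
    ultimately show ?thesis unfolding char_close_def by simp
  qed
  ultimately show ?case by blast
qed

lemma char_close_recurrence:
  fixes a :: "'v::euclidean_space"
  assumes "finite F" "F \<subseteq> continuous_characters" "e > 0"
  shows "\<exists>N\<ge>M. char_close F e (N *\<^sub>R a) 0"
proof -
  define M' where "M' = max M 1"
  obtain r :: "nat \<Rightarrow> nat" where r: "strict_mono r"
    "\<forall>i j. char_close F e ((real (r i) * M') *\<^sub>R a) ((real (r j) * M') *\<^sub>R a)"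
    using char_close_subseq[OF assms, of "\<lambda>n. (real n * M') *\<^sub>R a"] by auto
  have "r 0 < r 1" using r(1) by (simp add: strict_mono_def)
  then have "real (r 1) - real (r 0) \<ge> 1" by linarith
  then have "(real (r 1) - real (r 0)) * M' \<ge> 1 * M'"
    by (intro mult_right_mono) (auto simp: M'_def)
  then have "(real (r 1) - real (r 0)) * M' \<ge> M"
    unfolding M'_def by linarith
  moreover have "char_close F e ((real (r 1) * M') *\<^sub>R a - (real (r 0) * M') *\<^sub>R a) 0"
    using r(2) char_close_diff[OF assms(2)] by blast
  then have "char_close F e (((real (r 1) - real (r 0)) * M') *\<^sub>R a) 0"
    by (simp add: algebra_simps)
  ultimately show ?thesis by blast
qed

lemma char_close_bounded_gaps_nonneg:
  fixes a :: "'v::euclidean_space"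
  assumes "finite F" "F \<subseteq> continuous_characters" "e > 0"
  shows "\<exists>H\<ge>0. \<forall>r\<ge>0. \<exists>\<sigma>\<in>{0..H}. char_close F e (\<sigma> *\<^sub>R a) (r *\<^sub>R a)"
proof (rule ccontr)
  \<comment> \<open>Otherwise there are times s 0 < s 1 < ... each far from all earlier ones,
     contradicting char_close_subseq.\<close>
  assume "\<not> ?thesis"
  then have "\<forall>H\<ge>0. \<exists>r\<ge>0. \<forall>\<sigma>\<in>{0..H}. \<not> char_close F e (\<sigma> *\<^sub>R a) (r *\<^sub>R a)"
    by blast
  then obtain R where R: "\<And>H. H \<ge> 0 \<Longrightarrow>
      R H \<ge> 0 \<and> (\<forall>\<sigma>\<in>{0..H}. \<not> char_close F e (\<sigma> *\<^sub>R a) (R H *\<^sub>R a))"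
    by metis
  define s where "s n = (R ^^ Suc n) 0" for n
  have s_nonneg: "s n \<ge> 0" for n
    by (induction n) (use R in \<open>auto simp: s_def\<close>)
  have s_far: "\<forall>\<sigma>\<in>{0..s n}. \<not> char_close F e (\<sigma> *\<^sub>R a) (s (Suc n) *\<^sub>R a)" for n
    using R[OF s_nonneg[of n]] by (simp add: s_def)
  have "s n < s (Suc n)" for n
  proof (rule ccontr)
    assume "\<not> s n < s (Suc n)"
    then have "s (Suc n) \<in> {0..s n}" using s_nonneg[of "Suc n"] by simp
    then have "\<not> char_close F e (s (Suc n) *\<^sub>R a) (s (Suc n) *\<^sub>R a)"
      using s_far[of n] by blast
    then show False using char_close_refl[OF assms(3)] by metis
  qed
  then have s_mono: "strict_mono s"
    by (rule strict_monoI_Suc)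
  obtain r :: "nat \<Rightarrow> nat" where r: "strict_mono r" "\<forall>i j. char_close F e (s (r i) *\<^sub>R a) (s (r j) *\<^sub>R a)"
    using char_close_subseq[OF assms, of "\<lambda>n. s n *\<^sub>R a"] by auto
  have "r 0 < r 1" using r(1) by (simp add: strict_mono_def)
  then obtain k where k: "r 1 = Suc (r 0 + k)" using less_imp_Suc_add by blast
  have "s (r 0) \<le> s (r 0 + k)"
    using s_mono by (simp add: strict_mono_less_eq)
  then have "s (r 0) \<in> {0..s (r 0 + k)}" using s_nonneg by simp
  then show False
    using s_far[of "r 0 + k"] r(2) k by metis
qed

lemma char_close_bounded_gaps:
  fixes a :: "'v::euclidean_space"
  assumes "finite F" "F \<subseteq> continuous_characters" "e > 0"
  shows "\<exists>H\<ge>0. \<forall>r. \<exists>\<sigma>\<in>{0..H}. char_close F e (\<sigma> *\<^sub>R a) (r *\<^sub>R a)"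
proof -
  have e2: "e/2 > 0" using assms(3) by simp
  obtain H where H: "H \<ge> 0" "\<forall>r\<ge>0. \<exists>\<sigma>\<in>{0..H}. char_close F (e/2) (\<sigma> *\<^sub>R a) (r *\<^sub>R a)"
    using char_close_bounded_gaps_nonneg[OF assms(1,2) e2] by blast
  have "\<exists>\<sigma>\<in>{0..H}. char_close F e (\<sigma> *\<^sub>R a) (r *\<^sub>R a)" for r
  proof -
    obtain N where N: "N \<ge> - r" "char_close F (e/2) (N *\<^sub>R a) 0"
      using char_close_recurrence[OF assms(1,2) e2, of "- r" a] by blast
    then have "r + N \<ge> 0" by linarith
    then obtain \<sigma> where \<sigma>: "\<sigma> \<in> {0..H}" "char_close F (e/2) (\<sigma> *\<^sub>R a) ((r + N) *\<^sub>R a)"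
      using H(2) by blast
    have "char_close F (e/2) (N *\<^sub>R a + r *\<^sub>R a) (0 + r *\<^sub>R a)"
      using N(2) char_close_translate[OF assms(2)] by blast
    then have "char_close F (e/2) ((r + N) *\<^sub>R a) (r *\<^sub>R a)"
      by (simp add: scaleR_add_left add.commute)
    then have "char_close F (e/2 + e/2) (\<sigma> *\<^sub>R a) (r *\<^sub>R a)"
      by (rule char_close_trans[OF \<sigma>(2)])
    then show ?thesis using \<sigma>(1) by auto
  qed
  then show ?thesis using H(1) by blast
qed

lemma shift_exponent_bound:
  fixes D k j :: nat
  assumes "1 \<le> D" "k \<le> D" "1 \<le> j" "j \<le> k" "\<not> (j = 1 \<and> k = D)"
  shows "k - j + 1 \<le> (D - 1) * j"
proof (cases "j = 1")
  case True
  then have "k \<noteq> D" using assms(5) by simp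
  then show ?thesis using True assms by simp
next
  case False
  then have "j \<ge> 2" using assms(3) by simp
  have "(D - 1) * 1 \<le> (D - 1) * j" using assms(3) by (rule mult_le_mono2)
  moreover have "k - j + 1 \<le> D - 1" using \<open>j \<ge> 2\<close> assms(2,4) by linarith
  ultimately show ?thesis by linarith
qed

lemma shift_binomial_term_le:
  fixes t \<sigma> H :: real and D k j :: nat
  assumes "1 \<le> D" "k \<le> D" "1 \<le> j" "j \<le> k" "\<not> (j = 1 \<and> k = D)" "1 \<le> t" "0 \<le> \<sigma>" "\<sigma> \<le> H"
  shows "(\<sigma> / (real D * t ^ (D - 1))) ^ j * t ^ (k - j) \<le> H ^ j / t"
proof -
  have t: "t > 0" using assms(6) by simp
  have "(\<sigma> / (real D * t ^ (D - 1))) ^ j = \<sigma> ^ j / (real D ^ j * t ^ ((D - 1) * j))"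
    by (simp add: power_divide power_mult_distrib flip: power_mult)
  then have "(\<sigma> / (real D * t ^ (D - 1))) ^ j * t ^ (k - j) * t
      = \<sigma> ^ j * t ^ (k - j + 1) / (real D ^ j * t ^ ((D - 1) * j))"
    by (simp add: algebra_simps)
  also have "\<dots> \<le> \<sigma> ^ j * t ^ ((D - 1) * j) / (1 * t ^ ((D - 1) * j))"
  proof (rule frac_le)
    show "\<sigma> ^ j * t ^ (k - j + 1) \<le> \<sigma> ^ j * t ^ ((D - 1) * j)"
      using power_increasing[OF shift_exponent_bound[OF assms(1-5)] assms(6)] assms(7)
      by (simp add: mult_left_mono)
    show "1 * t ^ ((D - 1) * j) \<le> real D ^ j * t ^ ((D - 1) * j)"
      using assms(1) t by (intro mult_right_mono) (simp_all add: one_le_power)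
  qed (use assms(7) t in simp_all)
  also have "\<dots> = \<sigma> ^ j" using t by simp
  also have "\<dots> \<le> H ^ j" using assms(7,8) by (simp add: power_mono)
  finally show ?thesis using t by (simp add: le_divide_eq)
qed

lemma shift_binomial_term_bound:
  fixes t \<sigma> H :: real and D k j :: nat
  assumes "1 \<le> D" "k \<le> D" "1 \<le> j" "j \<le> k" "1 \<le> t" "0 \<le> \<sigma>" "\<sigma> \<le> H"
  shows "\<bar>real (k choose j) * (\<sigma> / (real D * t ^ (D - 1))) ^ j * t ^ (k - j)
      - (if j = 1 \<and> k = D then \<sigma> else 0)\<bar> \<le> real (k choose j) * H ^ j / t"
proof (cases "j = 1 \<and> k = D")
  case True
  have "t > 0" using assms(5) by simp
  then have "real (k choose j) * (\<sigma> / (real D * t ^ (D - 1))) ^ j * t ^ (k - j) = \<sigma>"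
    using True assms(1) by simp
  then show ?thesis using True assms(5-7) by simp
next
  case False
  have "(\<sigma> / (real D * t ^ (D - 1))) ^ j * t ^ (k - j) \<le> H ^ j / t"
    by (rule shift_binomial_term_le[OF assms(1-4) False assms(5-7)])
  then have "real (k choose j) * ((\<sigma> / (real D * t ^ (D - 1))) ^ j * t ^ (k - j))
      \<le> real (k choose j) * (H ^ j / t)"
    by (rule mult_left_mono) simp
  moreover have "0 \<le> (\<sigma> / (real D * t ^ (D - 1))) ^ j * t ^ (k - j)"
    using assms(5,6) by simp
  ultimately show ?thesis
    unfolding if_not_P[OF False] by (simp add: mult.assoc)
qed

lemma power_shift_estimate:
  fixes t \<sigma> H :: real and D k :: nat
  assumes "1 \<le> D" "k \<le> D" "1 \<le> t" "0 \<le> \<sigma>" "\<sigma> \<le> H"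
  shows "\<bar>(t + \<sigma> / (real D * t ^ (D - 1))) ^ k - t ^ k - (if k = D then \<sigma> else 0)\<bar> \<le> (1 + H) ^ k / t"
proof -
  define b where "b j = real (k choose j) * (\<sigma> / (real D * t ^ (D - 1))) ^ j * t ^ (k - j)" for j
  define c where "c j = (if j = 1 \<and> k = D then \<sigma> else 0)" for j :: nat
  have "{..k} = insert 0 {1..k}" by auto
  then have "(t + \<sigma> / (real D * t ^ (D - 1))) ^ k = t ^ k + (\<Sum>j\<in>{1..k}. b j)"
    using binomial_ring[of "\<sigma> / (real D * t ^ (D - 1))" t k] by (simp add: b_def add.commute)
  moreover have "(\<Sum>j\<in>{1..k}. c j) = (if k = D then \<sigma> else 0)"
    using assms(1) by (cases "k = D") (simp_all add: c_def)
  ultimately have "\<bar>(t + \<sigma> / (real D * t ^ (D - 1))) ^ k - t ^ k - (if k = D then \<sigma> else 0)\<bar>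
      = \<bar>\<Sum>j\<in>{1..k}. b j - c j\<bar>"
    by (simp add: sum_subtractf)
  also have "\<dots> \<le> (\<Sum>j\<in>{1..k}. \<bar>b j - c j\<bar>)"
    by (rule sum_abs)
  also have "\<dots> \<le> (\<Sum>j\<in>{1..k}. real (k choose j) * H ^ j / t)"
    unfolding b_def c_def using shift_binomial_term_bound[OF assms(1,2) _ _ assms(3-5)]
    by (intro sum_mono) simp
  also have "\<dots> \<le> (\<Sum>j\<le>k. real (k choose j) * H ^ j * 1 ^ (k - j)) / t"
    using assms(3-5) by (simp add: sum_divide_distrib sum_mono2)
  also have "\<dots> = (1 + H) ^ k / t"
    using binomial_ring[of H 1 k] by (simp add: add.commute)
  finally show ?thesis .
qed

definition poly_curve :: "(nat \<Rightarrow> 'v::real_vector) \<Rightarrow> nat \<Rightarrow> real \<Rightarrow> 'v" where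
  "poly_curve a D t = (\<Sum>k\<le>D. t ^ k *\<^sub>R a k)"

lemma poly_curve_shift_le:
  fixes a :: "nat \<Rightarrow> 'v::real_normed_vector"
  assumes "1 \<le> D" "1 \<le> t" "0 \<le> \<sigma>" "\<sigma> \<le> H"
  shows "norm (poly_curve a D (t + \<sigma> / (real D * t ^ (D - 1))) - poly_curve a D t - \<sigma> *\<^sub>R a D)
    \<le> (\<Sum>k\<le>D. (1 + H) ^ k * norm (a k)) / t"
proof -
  define h where "h = \<sigma> / (real D * t ^ (D - 1))"
  have "(\<Sum>k\<le>D. (if k = D then \<sigma> else 0) *\<^sub>R a k) = \<sigma> *\<^sub>R a D"
    by (simp add: if_distrib[of "\<lambda>c. c *\<^sub>R _"] cong: if_cong)
  then have "poly_curve a D (t + h) - poly_curve a D t - \<sigma> *\<^sub>R a D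
      = (\<Sum>k\<le>D. ((t + h) ^ k - t ^ k - (if k = D then \<sigma> else 0)) *\<^sub>R a k)"
    unfolding poly_curve_def by (simp add: scaleR_diff_left sum_subtractf)
  then have "norm (poly_curve a D (t + h) - poly_curve a D t - \<sigma> *\<^sub>R a D)
      \<le> (\<Sum>k\<le>D. \<bar>(t + h) ^ k - t ^ k - (if k = D then \<sigma> else 0)\<bar> * norm (a k))"
    by (simp add: norm_sum[THEN order_trans])
  also have "\<dots> \<le> (\<Sum>k\<le>D. (1 + H) ^ k / t * norm (a k))"
    unfolding h_def using power_shift_estimate[OF assms(1) _ assms(2-4)]
    by (intro sum_mono mult_right_mono) simp_all
  also have "\<dots> = (\<Sum>k\<le>D. (1 + H) ^ k * norm (a k)) / t"
    by (simp add: sum_divide_distrib)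
  finally show ?thesis unfolding h_def .
qed

lemma poly_curve_shift_char_close:
  fixes F :: "('v::euclidean_space \<Rightarrow> complex) set"
  assumes F: "finite F" "F \<subseteq> continuous_characters" and "e > 0" "1 \<le> D" "0 \<le> H"
  shows "\<exists>T. \<forall>t\<ge>T. \<forall>\<sigma>\<in>{0..H}.
    char_close F e (poly_curve a D (t + \<sigma> / (real D * t ^ (D - 1)))) (poly_curve a D t + \<sigma> *\<^sub>R a D)"
proof -
  obtain d where d: "d > 0" "\<forall>x::'v. norm x < d \<longrightarrow> char_close F e x 0"
    using char_close_near_0[OF F \<open>e > 0\<close>] by blast
  define M where "M = (\<Sum>k\<le>D. (1 + H) ^ k * norm (a k))"
  have "char_close F e (poly_curve a D (t + \<sigma> / (real D * t ^ (D - 1)))) (poly_curve a D t + \<sigma> *\<^sub>R a D)"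
    if t: "max 1 (M / d + 1) \<le> t" and \<sigma>: "\<sigma> \<in> {0..H}" for t \<sigma>
  proof -
    have "M / d < t" using t by simp
    then have "M / t < d"
      using t d(1) by (simp add: divide_less_eq mult.commute)
    then have "norm (poly_curve a D (t + \<sigma> / (real D * t ^ (D - 1))) - poly_curve a D t - \<sigma> *\<^sub>R a D) < d"
      using poly_curve_shift_le[OF assms(4) _ _ _, of t \<sigma> H a] t \<sigma> unfolding M_def by simp
    then show ?thesis
      using d(2) char_close_diff[OF F(2), of e "poly_curve a D (t + \<sigma> / (real D * t ^ (D - 1)))"]
      by (simp add: diff_diff_eq)
  qed
  then show ?thesis by blast
qed

lemma poly_curve_0: "poly_curve a 0 t = a 0"
  unfolding poly_curve_def by simp

lemma poly_curve_Suc: "poly_curve a (Suc D) t = poly_curve a D t + t ^ Suc D *\<^sub>R a (Suc D)"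
  unfolding poly_curve_def by simp

definition frequently_close_mod ::
    "('v::plus \<Rightarrow> complex) set \<Rightarrow> 'v set \<Rightarrow> (real \<Rightarrow> 'v) \<Rightarrow> 'v \<Rightarrow> bool" where
  "frequently_close_mod F U P y \<longleftrightarrow>
    (\<forall>e>0. \<forall>T. \<exists>t\<ge>T. \<exists>u\<in>U. char_close F e (P t) (y + u))"

lemma frequently_close_mod_poly_curve_Suc:
  fixes F :: "('v::euclidean_space \<Rightarrow> complex) set"
  assumes F: "finite F" "F \<subseteq> continuous_characters" and U: "subspace U"
    and close: "frequently_close_mod F (span (insert (a (Suc D)) U)) (poly_curve a D) y"
  shows "frequently_close_mod F U (poly_curve a (Suc D)) y"
  unfolding frequently_close_mod_def
proof (intro allI impI)
  fix e T :: real
  assume "e > 0"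
  define b where "b = a (Suc D)"
  define e3 where "e3 = e / 3"
  have e3: "e3 > 0" using \<open>e > 0\<close> by (simp add: e3_def)
  obtain H where H: "H \<ge> 0" "\<forall>r. \<exists>\<sigma>\<in>{0..H}. char_close F e3 (\<sigma> *\<^sub>R b) (r *\<^sub>R b)"
    using char_close_bounded_gaps[OF F e3] by blast
  obtain T1 where T1: "\<forall>t\<ge>T1. \<forall>\<sigma>\<in>{0..H}. char_close F e3
      (poly_curve a (Suc D) (t + \<sigma> / (real (Suc D) * t ^ D))) (poly_curve a (Suc D) t + \<sigma> *\<^sub>R b)"
    using poly_curve_shift_char_close[OF F e3 _ H(1), of "Suc D" a] unfolding b_def by auto
  obtain t0 u' where t0: "t0 \<ge> max T (max 1 T1)" and u': "u' \<in> span (insert b U)"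
    and close0: "char_close F e3 (poly_curve a D t0) (y + u')"
    using close e3 unfolding frequently_close_mod_def b_def by blast
  obtain s where "u' - s *\<^sub>R b \<in> span U"
    using u' unfolding span_insert by blast
  then have u: "u' - s *\<^sub>R b \<in> U"
    using span_minimal[OF order_refl U] by blast
  define u where "u = u' - s *\<^sub>R b"
  define r where "r = s + t0 ^ Suc D"
  \<comment> \<open>Raising the degree adds t0^(Suc D) b; this offset is cancelled by the bounded
     correction \<sigma> b, which a small change of time provides.\<close>
  have "char_close F e3 (poly_curve a D t0 + t0 ^ Suc D *\<^sub>R b) (y + u' + t0 ^ Suc D *\<^sub>R b)"
    using close0 char_close_translate[OF F(2)] by blast
  then have close1: "char_close F e3 (poly_curve a (Suc D) t0) (y + u + r *\<^sub>R b)"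
    by (simp add: poly_curve_Suc b_def u_def r_def scaleR_add_left algebra_simps)
  obtain \<sigma> where \<sigma>: "\<sigma> \<in> {0..H}" "char_close F e3 (\<sigma> *\<^sub>R b) ((- r) *\<^sub>R b)"
    using H(2) by blast
  define t1 where "t1 = t0 + \<sigma> / (real (Suc D) * t0 ^ D)"
  have "\<sigma> / (real (Suc D) * t0 ^ D) \<ge> 0" using \<sigma>(1) t0 by simp
  then have "t1 \<ge> T" using t0 by (simp add: t1_def)
  have "char_close F e3 (poly_curve a (Suc D) t1) (poly_curve a (Suc D) t0 + \<sigma> *\<^sub>R b)"
    using T1 t0 \<sigma>(1) unfolding t1_def by simp
  then have "char_close F (3 * e3) (poly_curve a (Suc D) t1) (y + u)"
    by (rule char_close_cancel_offset[OF F(2) _ close1 \<sigma>(2)])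
  then show "\<exists>t\<ge>T. \<exists>u\<in>U. char_close F e (poly_curve a (Suc D) t) (y + u)"
    using \<open>t1 \<ge> T\<close> u by (auto simp: e3_def u_def)
qed

lemma frequently_close_mod_poly_curve:
  fixes F :: "('v::euclidean_space \<Rightarrow> complex) set"
  assumes F: "finite F" "F \<subseteq> continuous_characters"
  shows "subspace U \<Longrightarrow> y - a 0 \<in> span (a ` {1..D} \<union> U)
    \<Longrightarrow> frequently_close_mod F U (poly_curve a D) y"
proof (induction D arbitrary: U)
  case 0
  then have "a 0 - y \<in> U"
    by (metis Un_empty_left atLeastatMost_empty image_empty minus_diff_eq span_eq_iff
        subspace_neg zero_less_one)
  show ?case
    unfolding frequently_close_mod_def poly_curve_0
  proof (intro allI impI)
    fix e T :: real
    assume "e > 0"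
    then have "char_close F e (a 0) (y + (a 0 - y))" by (simp add: char_close_refl)
    then show "\<exists>t\<ge>T. \<exists>u\<in>U. char_close F e (a 0) (y + u)"
      using \<open>a 0 - y \<in> U\<close> by blast
  qed
next
  case (Suc D)
  define U' where "U' = span (insert (a (Suc D)) U)"
  have "a ` {1..Suc D} \<union> U \<subseteq> a ` {1..D} \<union> U'"
    unfolding U'_def by (auto simp: atLeastAtMostSuc_conv intro: span_base)
  then have "y - a 0 \<in> span (a ` {1..D} \<union> U')"
    using Suc.prems(2) span_mono by blast
  then have "frequently_close_mod F U' (poly_curve a D) y"
    using Suc.IH[of U'] by (simp add: U'_def)
  then show ?case
    using frequently_close_mod_poly_curve_Suc[OF F Suc.prems(1)] by (simp add: U'_def)
qed

lemma poly_curve_bohr_dense: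
  fixes a :: "nat \<Rightarrow> 'v::euclidean_space"
  assumes "y - a 0 \<in> span (a ` {1..D})"
  shows "y \<in> bohr_topology closure_of (range (poly_curve a D))"
proof (rule in_bohr_closure_ofI)
  fix F :: "('v \<Rightarrow> complex) set" and e :: real
  assume F: "finite F" "F \<subseteq> continuous_characters" and "e > 0"
  have "y - a 0 \<in> span (a ` {1..D} \<union> {0})"
    using assms span_mono[of "a ` {1..D}" "a ` {1..D} \<union> {0}"] by blast
  then have "frequently_close_mod F {0} (poly_curve a D) y"
    using frequently_close_mod_poly_curve[OF F] subspace_single_0 by blast
  then obtain t where "char_close F e (poly_curve a D t) y"
    using \<open>e > 0\<close> unfolding frequently_close_mod_def by fastforce
  then show "\<exists>x\<in>range (poly_curve a D). char_close F e x y" by blast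
qed

lemma affine_hull_poly_curve_subset:
  fixes a :: "nat \<Rightarrow> 'v::euclidean_space"
  shows "affine hull (range (poly_curve a D)) \<subseteq> {z. z - a 0 \<in> span (a ` {1..D})}"
proof (rule hull_minimal)
  show "range (poly_curve a D) \<subseteq> {z. z - a 0 \<in> span (a ` {1..D})}"
  proof clarify
    fix t
    have "{..D} = insert 0 {1..D}" by auto
    then have "poly_curve a D t - a 0 = (\<Sum>k\<in>{1..D}. t ^ k *\<^sub>R a k)"
      unfolding poly_curve_def by simp
    moreover have "(\<Sum>k\<in>{1..D}. t ^ k *\<^sub>R a k) \<in> span (a ` {1..D})"
      by (intro span_sum span_scale span_base) simp
    ultimately show "poly_curve a D t - a 0 \<in> span (a ` {1..D})" by simp
  qed
  have "{z. z - a 0 \<in> span (a ` {1..D})} = (+) (a 0) ` span (a ` {1..D})"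
    by (auto simp: image_iff) (metis add.commute diff_add_cancel)
  then show "affine {z. z - a 0 \<in> span (a ` {1..D})}"
    by (metis affine_translation subspace_imp_affine subspace_span)
qed

lemma affine_hull_poly_curve_subset_bohr_closure:
  fixes a :: "nat \<Rightarrow> 'v::euclidean_space"
  shows "affine hull (range (poly_curve a D)) \<subseteq> bohr_topology closure_of (range (poly_curve a D))"
  using affine_hull_poly_curve_subset poly_curve_bohr_dense by blast

definition scale_op :: "real \<Rightarrow> ('v::real_vector \<Rightarrow> 'v) \<Rightarrow> 'v \<Rightarrow> 'v" where
  "scale_op c X = (\<lambda>v. c *\<^sub>R X v)"

lemma linear_funpow: "linear (X :: 'v::real_vector \<Rightarrow> 'v) \<Longrightarrow> linear (X ^^ k)"
proof (induction k)
  case 0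
  then show ?case by (simp add: linear_iff)
next
  case (Suc k)
  then show ?case using linear_compose[of "X ^^ k" X] by (simp add: o_def)
qed

lemma funpow_scale_op:
  "linear (X :: 'v::real_vector \<Rightarrow> 'v) \<Longrightarrow> scale_op c X ^^ k = scale_op (c ^ k) (X ^^ k)"
  by (induction k) (simp_all add: scale_op_def fun_eq_iff linear_scale)

lemma funpow_nilpotent_apply:
  fixes X :: "'v::real_vector \<Rightarrow> 'v"
  assumes "linear X" "X ^^ n = (\<lambda>_. 0)" "n \<le> k"
  shows "(X ^^ k) w = 0"
proof -
  have "X ^^ k = X ^^ (k - n) \<circ> X ^^ n" using assms(3) by (simp flip: funpow_add)
  then show ?thesis
    using assms(2) linear_0[OF linear_funpow[OF assms(1)]] by simp
qed

lemma funpow_nilpotent_Suc: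
  fixes X :: "'v::real_vector \<Rightarrow> 'v"
  assumes "linear X" "X ^^ n = (\<lambda>_. 0)"
  shows "X ^^ Suc n = (\<lambda>_. 0)"
  by (rule ext) (rule funpow_nilpotent_apply[OF assms], simp)

lemma op_exp_scale_op_nilpotent:
  fixes X :: "'v::euclidean_space \<Rightarrow> 'v"
  assumes "linear X" "X ^^ n = (\<lambda>_. 0)"
  shows "op_exp (scale_op c X) w = (\<Sum>k<n. (c ^ k / fact k) *\<^sub>R (X ^^ k) w)"
proof -
  have "op_exp (scale_op c X) w = (\<Sum>k. (c ^ k / fact k) *\<^sub>R (X ^^ k) w)"
    unfolding op_exp_def funpow_scale_op[OF assms(1)] by (simp add: scale_op_def)
  also have "\<dots> = (\<Sum>k<n. (c ^ k / fact k) *\<^sub>R (X ^^ k) w)"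
    by (rule suminf_finite) (use funpow_nilpotent_apply[OF assms] in auto)
  finally show ?thesis .
qed

lemma op_exp_scale_op_0:
  fixes X :: "'v::euclidean_space \<Rightarrow> 'v"
  assumes "linear X" "X ^^ n = (\<lambda>_. 0)"
  shows "op_exp (scale_op 0 X) = id"
proof
  fix w
  have "op_exp (scale_op 0 X) w = (\<Sum>k<Suc n. (0 ^ k / fact k) *\<^sub>R (X ^^ k) w)"
    by (rule op_exp_scale_op_nilpotent[OF assms(1) funpow_nilpotent_Suc[OF assms]])
  also have "\<dots> = w"
    by (simp add: sum.lessThan_Suc_shift del: sum.lessThan_Suc)
  finally show "op_exp (scale_op 0 X) w = id w" by simp
qed

lemma nilpotent_sum_compose:
  fixes X :: "'v::real_vector \<Rightarrow> 'v"
  assumes lin: "linear X" and nil: "X ^^ n = (\<lambda>_. 0)"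
  shows "(\<Sum>i<n. \<alpha> i *\<^sub>R (X ^^ i) (\<Sum>j<n. \<beta> j *\<^sub>R (X ^^ j) w))
    = (\<Sum>k<n. (\<Sum>i\<le>k. \<alpha> i * \<beta> (k - i)) *\<^sub>R (X ^^ k) w)"
proof -
  define f where "f i j = (\<alpha> i * \<beta> j) *\<^sub>R (X ^^ (i + j)) w" for i j
  have "(\<Sum>i<n. \<alpha> i *\<^sub>R (X ^^ i) (\<Sum>j<n. \<beta> j *\<^sub>R (X ^^ j) w)) = (\<Sum>i<n. \<Sum>j<n. f i j)"
    by (simp add: f_def linear_sum[OF linear_funpow[OF lin]] linear_scale[OF linear_funpow[OF lin]]
        scaleR_sum_right funpow_add)
  also have "\<dots> = (\<Sum>(i, j)\<in>{..<n} \<times> {..<n}. f i j)"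
    by (simp add: sum.cartesian_product)
  also have "\<dots> = (\<Sum>(i, j)\<in>{(i, j). i + j < n}. f i j)"
    by (rule sum.mono_neutral_right)
      (auto simp: f_def, metis funpow_nilpotent_apply[OF lin nil] not_less)
  also have "\<dots> = (\<Sum>k<n. \<Sum>i\<le>k. f i (k - i))"
    by (rule sum.triangle_reindex)
  also have "\<dots> = (\<Sum>k<n. (\<Sum>i\<le>k. \<alpha> i * \<beta> (k - i)) *\<^sub>R (X ^^ k) w)"
    by (simp add: f_def scaleR_sum_left)
  finally show ?thesis .
qed

lemma exp_cauchy_coeff_inverse:
  fixes c :: real
  shows "(\<Sum>i\<le>k. c ^ i / fact i * ((- c) ^ (k - i) / fact (k - i))) = (if k = 0 then 1 else 0)"
proof -
  have "(c + - c) ^ k = (\<Sum>i\<le>k. real (k choose i) * c ^ i * (- c) ^ (k - i))"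
    by (rule binomial_ring)
  also have "\<dots> = (\<Sum>i\<le>k. fact k * (c ^ i / fact i * ((- c) ^ (k - i) / fact (k - i))))"
    by (intro sum.cong refl) (simp add: binomial_fact)
  also have "\<dots> = fact k * (\<Sum>i\<le>k. c ^ i / fact i * ((- c) ^ (k - i) / fact (k - i)))"
    by (simp add: sum_distrib_left)
  finally have "(\<Sum>i\<le>k. c ^ i / fact i * ((- c) ^ (k - i) / fact (k - i))) = 0 ^ k / fact k"
    by (simp add: field_simps)
  then show ?thesis by simp
qed

lemma op_exp_scale_op_inverse:
  fixes X :: "'v::euclidean_space \<Rightarrow> 'v"
  assumes lin: "linear X" and nil: "X ^^ n = (\<lambda>_. 0)"
  shows "op_exp (scale_op c X) \<circ> op_exp (scale_op (- c) X) = id"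
proof
  fix w
  \<comment> \<open>Summing up to Suc n keeps the identity term k = 0 even when n = 0.\<close>
  note nil' = funpow_nilpotent_Suc[OF lin nil]
  have "(op_exp (scale_op c X) \<circ> op_exp (scale_op (- c) X)) w
      = (\<Sum>i<Suc n. (c ^ i / fact i) *\<^sub>R (X ^^ i) (\<Sum>j<Suc n. ((- c) ^ j / fact j) *\<^sub>R (X ^^ j) w))"
    by (simp add: op_exp_scale_op_nilpotent[OF lin nil'] del: sum.lessThan_Suc)
  also have "\<dots> = (\<Sum>k<Suc n. (\<Sum>i\<le>k. c ^ i / fact i * ((- c) ^ (k - i) / fact (k - i))) *\<^sub>R (X ^^ k) w)"
    by (rule nilpotent_sum_compose[OF lin nil'])
  also have "\<dots> = (\<Sum>k<Suc n. (if k = 0 then 1 else 0) *\<^sub>R (X ^^ k) w)"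
    by (simp only: exp_cauchy_coeff_inverse)
  also have "\<dots> = w"
    by (simp add: sum.lessThan_Suc_shift del: sum.lessThan_Suc)
  finally show "(op_exp (scale_op c X) \<circ> op_exp (scale_op (- c) X)) w = id w" by simp
qed

definition polynomial_map :: "(real \<Rightarrow> 'v::euclidean_space) \<Rightarrow> bool" where
  "polynomial_map Q \<longleftrightarrow> (\<forall>b\<in>Basis. \<exists>p. \<forall>t. Q t \<bullet> b = poly p t)"

lemma polynomial_map_const: "polynomial_map (\<lambda>t. w)"
  unfolding polynomial_map_def by (auto intro!: exI[of _ "[:w \<bullet> _:]"])

lemma polynomial_map_add:
  assumes "polynomial_map Q" "polynomial_map R"
  shows "polynomial_map (\<lambda>t. Q t + R t)"
  unfolding polynomial_map_def
proof
  fix b :: 'a assume "b \<in> Basis"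
  then obtain p q where "\<forall>t. Q t \<bullet> b = poly p t" "\<forall>t. R t \<bullet> b = poly q t"
    using assms unfolding polynomial_map_def by blast
  then have "\<forall>t. (Q t + R t) \<bullet> b = poly (p + q) t" by (simp add: inner_add_left)
  then show "\<exists>p. \<forall>t. (Q t + R t) \<bullet> b = poly p t" by blast
qed

lemma polynomial_map_scaleR_poly:
  assumes "polynomial_map Q"
  shows "polynomial_map (\<lambda>t. poly q t *\<^sub>R Q t)"
  unfolding polynomial_map_def
proof
  fix b :: 'a assume "b \<in> Basis"
  then obtain p where "\<forall>t. Q t \<bullet> b = poly p t"
    using assms unfolding polynomial_map_def by blast
  then have "\<forall>t. (poly q t *\<^sub>R Q t) \<bullet> b = poly (q * p) t" by simp
  then show "\<exists>p. \<forall>t. (poly q t *\<^sub>R Q t) \<bullet> b = poly p t" by blast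
qed

lemma polynomial_map_sum:
  "finite I \<Longrightarrow> (\<And>i. i \<in> I \<Longrightarrow> polynomial_map (Q i))
    \<Longrightarrow> polynomial_map (\<lambda>t. \<Sum>i\<in>I. Q i t)"
  by (induction I rule: finite_induct) (simp_all add: polynomial_map_const polynomial_map_add)

lemma polynomial_map_linear:
  fixes X :: "'v::euclidean_space \<Rightarrow> 'v"
  assumes lin: "linear X" and Q: "polynomial_map Q"
  shows "polynomial_map (\<lambda>t. X (Q t))"
proof -
  obtain P where P: "\<forall>c\<in>Basis. \<forall>t. Q t \<bullet> c = poly (P c) t"
    using Q unfolding polynomial_map_def by metis
  have "X (Q t) = X (\<Sum>c\<in>Basis. (Q t \<bullet> c) *\<^sub>R c)" for t
    by (simp add: euclidean_representation)
  also have "\<dots> t = (\<Sum>c\<in>Basis. poly (P c) t *\<^sub>R X c)" for t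
    using P by (simp add: linear_sum[OF lin] linear_scale[OF lin])
  finally have "(\<lambda>t. X (Q t)) = (\<lambda>t. \<Sum>c\<in>Basis. poly (P c) t *\<^sub>R X c)" by blast
  then show ?thesis
    by (simp add: polynomial_map_sum polynomial_map_scaleR_poly polynomial_map_const)
qed

lemma polynomial_map_imp_poly_curve:
  fixes Q :: "real \<Rightarrow> 'v::euclidean_space"
  assumes "polynomial_map Q"
  shows "\<exists>a D. Q = poly_curve a D"
proof -
  obtain P where P: "\<forall>c\<in>Basis. \<forall>t. Q t \<bullet> c = poly (P c) t"
    using assms unfolding polynomial_map_def by metis
  define D where "D = Max ((\<lambda>c. degree (P c)) ` Basis)"
  have poly_P: "poly (P c) t = (\<Sum>i\<le>D. coeff (P c) i * t ^ i)" if "c \<in> Basis" for c t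
  proof -
    have "degree (P c) \<le> D" unfolding D_def using that by simp
    then show ?thesis
      unfolding poly_altdef by (intro sum.mono_neutral_left) (auto simp: coeff_eq_0)
  qed
  define a where "a i = (\<Sum>c\<in>Basis. coeff (P c) i *\<^sub>R c)" for i
  have "Q t = poly_curve a D t" for t
  proof -
    have "Q t = (\<Sum>c\<in>Basis. (Q t \<bullet> c) *\<^sub>R c)" by (simp add: euclidean_representation)
    also have "\<dots> = (\<Sum>c\<in>Basis. \<Sum>i\<le>D. t ^ i *\<^sub>R (coeff (P c) i *\<^sub>R c))"
      using P poly_P by (simp add: scaleR_sum_left mult.commute)
    also have "\<dots> = poly_curve a D t"
      unfolding poly_curve_def a_def scaleR_sum_right by (rule sum.swap)
    finally show ?thesis .
  qed
  then show ?thesis by blast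
qed

fun exp_curve :: "(real poly \<times> ('v::euclidean_space \<Rightarrow> 'v)) list \<Rightarrow> real \<Rightarrow> 'v \<Rightarrow> 'v" where
  "exp_curve [] t = id"
| "exp_curve ((p, X) # l) t = op_exp (scale_op (poly p t) X) \<circ> exp_curve l t"

lemma exp_curve_append: "exp_curve (l1 @ l2) t = exp_curve l1 t \<circ> exp_curve l2 t"
  by (induction l1 t rule: exp_curve.induct) (simp_all add: o_assoc)

lemma exp_curve_pcompose:
  "exp_curve (map (apfst (\<lambda>p. pcompose p q)) l) t = exp_curve l (poly q t)"
  by (induction l t rule: exp_curve.induct) (simp_all add: poly_pcompose)

lemma exp_curve_at_0:
  assumes nil: "\<forall>X\<in>L. linear X \<and> nilpotent_op X"
    and "snd ` set l \<subseteq> L" "\<forall>p\<in>fst ` set l. poly p 0 = 0"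
  shows "exp_curve l 0 = id"
  using assms(2,3)
proof (induction l)
  case (Cons pX l)
  obtain p X where [simp]: "pX = (p, X)" by fastforce
  obtain n where X: "linear X" "X ^^ n = (\<lambda>_. 0)"
    using nil Cons.prems(1) unfolding nilpotent_op_def by auto
  then show ?case
    using Cons by (simp add: op_exp_scale_op_0[OF X])
qed simp

lemma exp_curve_inverse:
  assumes nil: "\<forall>X\<in>L. linear X \<and> nilpotent_op X" and "snd ` set l \<subseteq> L"
  shows "exp_curve l t \<circ> exp_curve (rev (map (apfst uminus) l)) t = id
    \<and> exp_curve (rev (map (apfst uminus) l)) t \<circ> exp_curve l t = id"
  using assms(2)
proof (induction l t rule: exp_curve.induct)
  case (2 p X l t)
  obtain n where X: "linear X" "X ^^ n = (\<lambda>_. 0)"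
    using nil "2.prems" unfolding nilpotent_op_def by auto
  define E where "E c = op_exp (scale_op c X)" for c
  define G G' where "G = exp_curve l t" and "G' = exp_curve (rev (map (apfst uminus) l)) t"
  have E: "E c \<circ> E (- c) = id" for c
    unfolding E_def by (rule op_exp_scale_op_inverse[OF X])
  have "snd ` set l \<subseteq> L" using "2.prems" by simp
  then have IH: "G \<circ> G' = id" "G' \<circ> G = id"
    using "2.IH" unfolding G_def G'_def by blast+
  have "exp_curve ((p, X) # l) t \<circ> exp_curve (rev (map (apfst uminus) ((p, X) # l))) t
      = E (poly p t) \<circ> (G \<circ> G') \<circ> E (- poly p t)"
    by (simp add: E_def G_def G'_def exp_curve_append o_assoc)
  moreover have "exp_curve (rev (map (apfst uminus) ((p, X) # l))) t \<circ> exp_curve ((p, X) # l) t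
      = G' \<circ> (E (- poly p t) \<circ> E (poly p t)) \<circ> G"
    by (simp add: E_def G_def G'_def exp_curve_append o_assoc)
  ultimately show ?case
    using IH E[of "poly p t"] E[of "- poly p t"] by (simp only: comp_id minus_minus simp_thms)
qed simp

lemma exp_curve_in_lie_group:
  assumes "lie_subalgebra L" "snd ` set l \<subseteq> L"
  shows "exp_curve l t \<in> lie_group_of L"
  using assms(2)
proof (induction l t rule: exp_curve.induct)
  case 1
  show ?case unfolding exp_curve.simps(1) by (rule lie_group_of.id_in)
next
  case (2 p X l t)
  then have "scale_op (poly p t) X \<in> L" "exp_curve l t \<in> lie_group_of L"
    using assms(1) unfolding lie_subalgebra_def scale_op_def by simp_all
  then show ?case
    unfolding exp_curve.simps by (intro lie_group_of.comp_in lie_group_of.exp_in)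
qed

lemma polynomial_map_exp_curve_apply:
  assumes nil: "\<forall>X\<in>L. linear X \<and> nilpotent_op X"
    and "snd ` set l \<subseteq> L" "polynomial_map Q"
  shows "polynomial_map (\<lambda>t. exp_curve l t (Q t))"
  using assms(2)
proof (induction l)
  case Nil
  then show ?case using assms(3) by simp
next
  case (Cons pX l)
  obtain p X where [simp]: "pX = (p, X)" by fastforce
  obtain n where X: "linear X" "X ^^ n = (\<lambda>_. 0)"
    using nil Cons.prems unfolding nilpotent_op_def by auto
  define R where "R t = exp_curve l t (Q t)" for t
  have R: "polynomial_map R" using Cons unfolding R_def by simp
  have "polynomial_map (\<lambda>t. poly (smult (1 / fact k) (p ^ k)) t *\<^sub>R (X ^^ k) (R t))" for k
    by (rule polynomial_map_scaleR_poly, rule polynomial_map_linear[OF linear_funpow[OF X(1)] R])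
  then have "polynomial_map (\<lambda>t. \<Sum>k<n. poly (smult (1 / fact k) (p ^ k)) t *\<^sub>R (X ^^ k) (R t))"
    by (simp add: polynomial_map_sum)
  then show ?case
    by (simp add: R_def op_exp_scale_op_nilpotent[OF X] poly_power)
qed

lemma lie_group_of_eq_exp_curve:
  assumes nil: "\<forall>X\<in>L. linear X \<and> nilpotent_op X" and "g \<in> lie_group_of L"
  shows "\<exists>l. snd ` set l \<subseteq> L \<and> (\<forall>p\<in>fst ` set l. poly p 0 = 0) \<and> exp_curve l 1 = g"
  using assms(2)
proof (induction rule: lie_group_of.induct)
  case id_in
  show ?case by (intro exI[of _ "[]"]) simp
next
  case (exp_in X)
  have "exp_curve [([:0, 1:], X)] 1 = op_exp X"
    by (simp add: scale_op_def)
  then show ?case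
    using exp_in by (intro exI[of _ "[([:0, 1:], X)]"]) simp
next
  case (comp_in g h)
  then obtain l1 l2 where "snd ` set l1 \<subseteq> L" "\<forall>p\<in>fst ` set l1. poly p 0 = 0" "exp_curve l1 1 = g"
    "snd ` set l2 \<subseteq> L" "\<forall>p\<in>fst ` set l2. poly p 0 = 0" "exp_curve l2 1 = h"
    by blast
  then show ?case
    by (intro exI[of _ "l1 @ l2"]) (auto simp: exp_curve_append)
next
  case (inv_in g)
  then obtain l where l: "snd ` set l \<subseteq> L" "\<forall>p\<in>fst ` set l. poly p 0 = 0" "exp_curve l 1 = g"
    by blast
  have "inv g = exp_curve (rev (map (apfst uminus) l)) 1"
    using exp_curve_inverse[OF nil l(1), of 1] l(3) by (metis inv_unique_comp)
  then show ?case
    using l(1,2) by (intro exI[of _ "rev (map (apfst uminus) l)"]) auto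
qed

lemma poly_vanishing_except:
  fixes S :: "real set"
  assumes "finite S" "\<tau> \<notin> S"
  shows "\<exists>q. poly q \<tau> = 1 \<and> (\<forall>\<sigma>\<in>S. poly q \<sigma> = 0)"
proof -
  define p where "p = (\<Prod>\<sigma>\<in>S. [:- \<sigma>, 1:])"
  have poly_p: "poly p t = (\<Prod>\<sigma>\<in>S. t - \<sigma>)" for t
    unfolding p_def poly_prod by simp
  then have "poly p \<tau> \<noteq> 0" using assms by auto
  moreover have "poly p \<sigma> = 0" if "\<sigma> \<in> S" for \<sigma>
    unfolding poly_p using assms(1) that by (simp add: prod_zero_iff)
  ultimately show ?thesis
    by (intro exI[of _ "smult (inverse (poly p \<tau>)) p"]) simp
qed

lemma exp_curve_reach:
  fixes L :: "('v::euclidean_space \<Rightarrow> 'v) set"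
  assumes sub: "lie_subalgebra L" and nil: "\<forall>X\<in>L. linear X \<and> nilpotent_op X"
    and l: "snd ` set l \<subseteq> L" and "finite S" "\<tau>0 \<notin> S" "h \<in> lie_group_of L"
  shows "\<exists>l'. snd ` set l' \<subseteq> L \<and> (\<forall>\<sigma>\<in>S. exp_curve l' \<sigma> = exp_curve l \<sigma>)
    \<and> exp_curve l' \<tau>0 = h"
proof -
  obtain q where q: "poly q \<tau>0 = 1" "\<forall>\<sigma>\<in>S. poly q \<sigma> = 0"
    using poly_vanishing_except[OF assms(4,5)] by blast
  define g0 where "g0 = exp_curve l \<tau>0"
  define l0 where "l0 = rev (map (apfst uminus) l)"
  have g0_inv: "inv g0 = exp_curve l0 \<tau>0" and "g0 \<circ> exp_curve l0 \<tau>0 = id"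
    using exp_curve_inverse[OF nil l, of \<tau>0] unfolding g0_def l0_def by (metis inv_unique_comp)+
  have "snd ` set l0 \<subseteq> L" using l by (auto simp: l0_def)
  then have "inv g0 \<circ> h \<in> lie_group_of L"
    unfolding g0_inv by (rule lie_group_of.comp_in[OF exp_curve_in_lie_group[OF sub] assms(6)])
  then obtain lk where lk: "snd ` set lk \<subseteq> L" "\<forall>p\<in>fst ` set lk. poly p 0 = 0"
    "exp_curve lk 1 = inv g0 \<circ> h"
    using lie_group_of_eq_exp_curve[OF nil] by blast
  define l' where "l' = l @ map (apfst (\<lambda>p. pcompose p q)) lk"
  have curve': "exp_curve l' t = exp_curve l t \<circ> exp_curve lk (poly q t)" for t
    unfolding l'_def by (simp add: exp_curve_append exp_curve_pcompose)
  have "\<forall>\<sigma>\<in>S. exp_curve l' \<sigma> = exp_curve l \<sigma>"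
    using curve' q(2) exp_curve_at_0[OF nil lk(1,2)] by simp
  moreover have "exp_curve l' \<tau>0 = g0 \<circ> (inv g0 \<circ> h)"
    using curve' q(1) lk(3) by (simp add: g0_def)
  then have "exp_curve l' \<tau>0 = h"
    using \<open>g0 \<circ> exp_curve l0 \<tau>0 = id\<close> by (simp add: g0_inv o_assoc)
  moreover have "snd ` set l' \<subseteq> L"
    using l lk(1) by (auto simp: l'_def)
  ultimately show ?thesis by blast
qed

lemma finite_orbit_subset_exp_curve:
  fixes L :: "('v::euclidean_space \<Rightarrow> 'v) set"
  assumes sub: "lie_subalgebra L" and nil: "\<forall>X\<in>L. linear X \<and> nilpotent_op X"
  shows "finite S \<Longrightarrow> S \<subseteq> (\<lambda>g. g v) ` lie_group_of L
    \<Longrightarrow> \<exists>l. snd ` set l \<subseteq> L \<and> S \<subseteq> range (\<lambda>t. exp_curve l t v)"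
proof (induction S rule: finite_induct)
  case empty
  show ?case by (intro exI[of _ "[]"]) simp
next
  case (insert x S)
  obtain l where l: "snd ` set l \<subseteq> L" "S \<subseteq> range (\<lambda>t. exp_curve l t v)"
    using insert by blast
  obtain h where h: "h \<in> lie_group_of L" "x = h v"
    using insert.prems by auto
  have "\<forall>y\<in>S. \<exists>t. exp_curve l t v = y" using l(2) by blast
  then obtain \<tau> where \<tau>: "\<forall>y\<in>S. exp_curve l (\<tau> y) v = y" by metis
  define \<tau>0 where "\<tau>0 = Max (insert 0 (\<tau> ` S)) + 1"
  have "\<tau>0 \<notin> \<tau> ` S"
  proof
    assume "\<tau>0 \<in> \<tau> ` S"
    then have "\<tau>0 \<le> Max (insert 0 (\<tau> ` S))" using insert(1) by simp
    then show False by (simp add: \<tau>0_def)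
  qed
  then obtain l' where l': "snd ` set l' \<subseteq> L" "\<forall>\<sigma>\<in>\<tau> ` S. exp_curve l' \<sigma> = exp_curve l \<sigma>"
    "exp_curve l' \<tau>0 = h"
    using exp_curve_reach[OF sub nil l(1) _ _ h(1)] insert(1) by blast
  have "insert x S \<subseteq> range (\<lambda>t. exp_curve l' t v)"
  proof
    fix y assume "y \<in> insert x S"
    then have "y = exp_curve l' \<tau>0 v \<or> (\<exists>z\<in>S. y = exp_curve l' (\<tau> z) v)"
      using l'(2,3) h(2) \<tau> by auto
    then show "y \<in> range (\<lambda>t. exp_curve l' t v)" by blast
  qed
  then show ?case using l'(1) by blast
qed

theorem theorem2:
  fixes L :: "('v::euclidean_space \<Rightarrow> 'v) set" and v :: 'v
  assumes "lie_subalgebra L"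
    and "nilpotent_lie_algebra L"
    and "\<forall>X\<in>L. nilpotent_op X"
  shows "affine hull ((\<lambda>g. g v) ` lie_group_of L)
           \<subseteq> bohr_topology closure_of ((\<lambda>g. g v) ` lie_group_of L)"
proof
  have nil: "\<forall>X\<in>L. linear X \<and> nilpotent_op X"
    using assms(1,3) unfolding lie_subalgebra_def by blast
  fix y
  assume "y \<in> affine hull ((\<lambda>g. g v) ` lie_group_of L)"
  then obtain S where S: "finite S" "S \<subseteq> (\<lambda>g. g v) ` lie_group_of L" "y \<in> affine hull S"
    unfolding affine_hull_explicit by blast
  obtain l where l: "snd ` set l \<subseteq> L" "S \<subseteq> range (\<lambda>t. exp_curve l t v)"
    using finite_orbit_subset_exp_curve[OF assms(1) nil S(1,2)] by blast
  obtain a D where curve: "(\<lambda>t. exp_curve l t v) = poly_curve a D"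
    using polynomial_map_imp_poly_curve
      polynomial_map_exp_curve_apply[OF nil l(1) polynomial_map_const] by blast
  have "y \<in> affine hull (range (poly_curve a D))"
    using S(3) l(2) hull_mono unfolding curve by blast
  then have "y \<in> bohr_topology closure_of (range (poly_curve a D))"
    using affine_hull_poly_curve_subset_bohr_closure by blast
  moreover have "range (poly_curve a D) \<subseteq> (\<lambda>g. g v) ` lie_group_of L"
    using exp_curve_in_lie_group[OF assms(1) l(1)] unfolding curve[symmetric] by blast
  ultimately show "y \<in> bohr_topology closure_of ((\<lambda>g. g v) ` lie_group_of L)"
    using closure_of_mono by blast
qed

end
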